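(* Let $G$ be a graph, let $R$ be a general position set of $G$, and let $v\in R$. Then $|R|\le \mathrm{ip}(v,G)+1$. In particular, if $v$ is a gp-vertex of $G$, then $\mathrm{gp}(G)\le \mathrm{ip}(v,G)+1$.
   Context: All graphs are finite, simple and connected. A geodesic is a shortest path. A set $S$ of vertices is a general position set of $G$ if no three vertices of $S$ lie on a common geodesic of $G$; $\mathrm{gp}(G)$ is the maximum cardinality of a general position set, and a general position set of that cardinality is a gp-set. A gp-vertex of $G$ is a vertex lying in at least one gp-set of $G$. For $v\in V(G)$, $\mathrm{ip}(v,G)$ is the minimum number of geodesics of $G$, each having $v$ as an end-vertex, whose vertex sets together cover $V(G)$. *)

theory Defs
  imports Main
begin

definition walk :: "('a \<Rightarrow> 'a \<Rightarrow> bool) \<Rightarrow> 'a set \<Rightarrow> 'a list \<Rightarrow> bool" where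
  "walk E V p \<longleftrightarrow> p \<noteq> [] \<and> set p \<subseteq> V \<and> (\<forall>i. Suc i < length p \<longrightarrow> E (p ! i) (p ! Suc i))"

definition graph :: "'a set \<Rightarrow> ('a \<Rightarrow> 'a \<Rightarrow> bool) \<Rightarrow> bool" where
  "graph V E \<longleftrightarrow> finite V \<and> V \<noteq> {} \<and>
     (\<forall>x y. E x y \<longrightarrow> x \<in> V \<and> y \<in> V) \<and>
     (\<forall>x y. E x y \<longrightarrow> E y x) \<and> (\<forall>x. \<not> E x x) \<and>
     (\<forall>x\<in>V. \<forall>y\<in>V. \<exists>p. walk E V p \<and> hd p = x \<and> last p = y)"

definition dist :: "'a set \<Rightarrow> ('a \<Rightarrow> 'a \<Rightarrow> bool) \<Rightarrow> 'a \<Rightarrow> 'a \<Rightarrow> nat" where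
  "dist V E u v = (LEAST n. \<exists>p. walk E V p \<and> hd p = u \<and> last p = v \<and> length p = Suc n)"

definition geodesic :: "'a set \<Rightarrow> ('a \<Rightarrow> 'a \<Rightarrow> bool) \<Rightarrow> 'a list \<Rightarrow> bool" where
  "geodesic V E p \<longleftrightarrow> walk E V p \<and> length p = Suc (dist V E (hd p) (last p))"

definition gp_set :: "'a set \<Rightarrow> ('a \<Rightarrow> 'a \<Rightarrow> bool) \<Rightarrow> 'a set \<Rightarrow> bool" where
  "gp_set V E S \<longleftrightarrow> S \<subseteq> V \<and>
     \<not> (\<exists>x\<in>S. \<exists>y\<in>S. \<exists>z\<in>S. x \<noteq> y \<and> y \<noteq> z \<and> x \<noteq> z \<and>
           (\<exists>p. geodesic V E p \<and> x \<in> set p \<and> y \<in> set p \<and> z \<in> set p))"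

definition gp :: "'a set \<Rightarrow> ('a \<Rightarrow> 'a \<Rightarrow> bool) \<Rightarrow> nat" where
  "gp V E = Max {card S | S. gp_set V E S}"

definition is_gp_set :: "'a set \<Rightarrow> ('a \<Rightarrow> 'a \<Rightarrow> bool) \<Rightarrow> 'a set \<Rightarrow> bool" where
  "is_gp_set V E S \<longleftrightarrow> gp_set V E S \<and> card S = gp V E"

definition gp_vertex :: "'a set \<Rightarrow> ('a \<Rightarrow> 'a \<Rightarrow> bool) \<Rightarrow> 'a \<Rightarrow> bool" where
  "gp_vertex V E v \<longleftrightarrow> (\<exists>S. is_gp_set V E S \<and> v \<in> S)"

definition ip :: "'a set \<Rightarrow> ('a \<Rightarrow> 'a \<Rightarrow> bool) \<Rightarrow> 'a \<Rightarrow> nat" where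
  "ip V E v = (LEAST k. \<exists>Ps. finite Ps \<and> card Ps = k \<and>
      (\<forall>p\<in>Ps. geodesic V E p \<and> (hd p = v \<or> last p = v)) \<and>
      V \<subseteq> (\<Union>p\<in>Ps. set p))"

end

theory Submission
  imports Defs
begin

text \<open>Every geodesic of a cover witnessing ip(v,G) passes through v, so as a general position
  set R containing v meets it in at most one further vertex. Choosing for each vertex of
  R - {v} a geodesic of the cover through it is therefore injective, giving
  |R| - 1 \<le> ip(v,G).\<close>

lemma geodesic_nonempty: "geodesic V E p \<Longrightarrow> p \<noteq> []"
  unfolding geodesic_def walk_def by blast

lemma geodesic_exists:
  assumes "graph V E" "x \<in> V" "y \<in> V"
  obtains p where "geodesic V E p" "hd p = x" "last p = y"
proof -
  obtain q where q: "walk E V q" "hd q = x" "last q = y"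
    using assms unfolding graph_def by blast
  then have "\<exists>n p. walk E V p \<and> hd p = x \<and> last p = y \<and> length p = Suc n"
    by (metis Suc_pred length_greater_0_conv walk_def)
  from LeastI_ex[OF this] obtain p where
    "walk E V p" "hd p = x" "last p = y" "length p = Suc (dist V E x y)"
    unfolding dist_def by blast
  then show ?thesis using that unfolding geodesic_def by auto
qed

lemma ip_cover_exists:
  assumes g: "graph V E" and v: "v \<in> V"
  obtains Ps where "finite Ps" "card Ps = ip V E v"
    "\<forall>p\<in>Ps. geodesic V E p \<and> (hd p = v \<or> last p = v)" "V \<subseteq> (\<Union>p\<in>Ps. set p)"
proof -
  define pick where "pick u = (SOME p. geodesic V E p \<and> hd p = v \<and> last p = u)" for u
  have pick: "geodesic V E (pick u) \<and> hd (pick u) = v \<and> last (pick u) = u" if "u \<in> V" for u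
    unfolding pick_def by (rule someI_ex) (metis geodesic_exists[OF g v that])
  have "finite (pick ` V)" using g unfolding graph_def by simp
  moreover have "\<forall>p\<in>pick ` V. geodesic V E p \<and> (hd p = v \<or> last p = v)"
    using pick by auto
  moreover have "V \<subseteq> (\<Union>p\<in>pick ` V. set p)"
  proof
    fix u assume u: "u \<in> V"
    then have "u \<in> set (pick u)" using pick[OF u] geodesic_nonempty last_in_set by metis
    then show "u \<in> (\<Union>p\<in>pick ` V. set p)" using u by blast
  qed
  ultimately have "\<exists>k Ps. finite Ps \<and> card Ps = k \<and>
      (\<forall>p\<in>Ps. geodesic V E p \<and> (hd p = v \<or> last p = v)) \<and> V \<subseteq> (\<Union>p\<in>Ps. set p)"
    by blast
  from LeastI_ex[OF this] obtain Ps where "finite Ps" "card Ps = ip V E v"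
    "\<forall>p\<in>Ps. geodesic V E p \<and> (hd p = v \<or> last p = v)" "V \<subseteq> (\<Union>p\<in>Ps. set p)"
    unfolding ip_def by blast
  then show ?thesis by (rule that)
qed

lemma card_gp_set_le_geodesic_cover:
  assumes R: "gp_set V E R" "finite R" and v: "v \<in> R"
    and Ps: "finite Ps" "\<forall>p\<in>Ps. geodesic V E p \<and> v \<in> set p" "R \<subseteq> (\<Union>p\<in>Ps. set p)"
  shows "card R \<le> card Ps + 1"
proof -
  obtain f where f: "\<forall>x\<in>R. f x \<in> Ps \<and> x \<in> set (f x)"
    using Ps(3) by (metis UN_iff subsetD)
  have "inj_on f (R - {v})"
  proof (rule inj_onI, rule ccontr)
    fix x y assume x: "x \<in> R - {v}" and y: "y \<in> R - {v}" and "f x = f y" "x \<noteq> y"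
    then have "geodesic V E (f x) \<and> x \<in> set (f x) \<and> y \<in> set (f x) \<and> v \<in> set (f x)"
      using f Ps(2) by auto
    then show False using R(1) x y v \<open>x \<noteq> y\<close> unfolding gp_set_def by blast
  qed
  then have "card (R - {v}) \<le> card Ps"
    using card_inj_on_le f Ps(1) by (metis DiffD1 image_subset_iff)
  then show ?thesis using R(2) v by (simp add: card_Diff_singleton)
qed

lemma card_gp_set_le_ip:
  assumes g: "graph V E" and R: "gp_set V E R" and v: "v \<in> R"
  shows "card R \<le> ip V E v + 1"
proof -
  have RV: "R \<subseteq> V" using R unfolding gp_set_def by blast
  have fin: "finite R" using RV g finite_subset unfolding graph_def by blast
  have "v \<in> V" using RV v by blast
  obtain Ps where Ps: "finite Ps" "card Ps = ip V E v"
    "\<forall>p\<in>Ps. geodesic V E p \<and> (hd p = v \<or> last p = v)" "V \<subseteq> (\<Union>p\<in>Ps. set p)"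
    by (rule ip_cover_exists[OF g \<open>v \<in> V\<close>])
  have through_v: "\<forall>p\<in>Ps. geodesic V E p \<and> v \<in> set p"
  proof
    fix p assume "p \<in> Ps"
    then have "geodesic V E p" "hd p = v \<or> last p = v" using Ps(3) by auto
    then show "geodesic V E p \<and> v \<in> set p"
      using geodesic_nonempty hd_in_set last_in_set by metis
  qed
  have "R \<subseteq> (\<Union>p\<in>Ps. set p)" using RV Ps(4) by blast
  from card_gp_set_le_geodesic_cover[OF R fin v Ps(1) through_v this]
  show ?thesis using Ps(2) by simp
qed

theorem theorem3p3:
  fixes V :: "'a set" and E :: "'a \<Rightarrow> 'a \<Rightarrow> bool" and R :: "'a set" and v :: 'a
  assumes "graph V E"
  shows "(gp_set V E R \<and> v \<in> R \<longrightarrow> card R \<le> ip V E v + 1)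
       \<and> (gp_vertex V E v \<longrightarrow> gp V E \<le> ip V E v + 1)"
  using card_gp_set_le_ip[OF assms] unfolding gp_vertex_def is_gp_set_def by metis

end
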